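(* Let $\psi\in\mathbf{\Psi}_n$. Define $|\!|\!|\cdot|\!|\!|_\psi:X^n\to\mathbb{R}$ by $$|\!|\!|x|\!|\!|_\psi:=\Big(\sum_{i=1}^n\|x_i\|\Big)\,\psi\Big(\frac{\|x_1\|}{\sum_{i=1}^n\|x_i\|},\ldots,\frac{\|x_{n}\|}{\sum_{i=1}^n\|x_i\|}\Big)\ \text{if } x\ne0_{X^n},\qquad |\!|\!|0_{X^n}|\!|\!|_\psi:=0,$$ for all $x:=(x_1,\ldots,x_n)\in X^n$. Then: (i) $|\!|\!|\cdot|\!|\!|_\psi \in\mathbf{N}_{X^n}$; (ii) if $\psi\in \mathbf{\Psi}^{\rm sc}_{n}$ and $\|\cdot\|$ is strictly convex, then $|\!|\!|\cdot|\!|\!|_\psi\in \mathbf{N}^{\rm sc}_{X^n}$; (iii) $\psi(s)=|\!|\!|(s_1\mathbf{u}_1,\ldots,s_{n}\mathbf{u}_n)|\!|\!|_{\psi}$ for all $(\mathbf{u}_1,\ldots,\mathbf{u}_n)\in \mathbb{S}_X\times\ldots\times\mathbb{S}_X$ and $s:=(s_1,\ldots,s_{n})\in\Omega_n$.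
   Context: Let $(X,\|\cdot\|)$ be a normed vector space, $n\ge2$, $\mathbb{S}_X$ its unit sphere. $\mathbf{N}_{X^n}$ is the family of norms $|\!|\!|\cdot|\!|\!|$ on $X^n$ satisfying (A1) $|\!|\!|(x_1,\ldots,x_n)|\!|\!|=|\!|\!|(\pm x_1,\ldots,\pm x_n)|\!|\!|$ for all $x\in X^n$ and all sign choices, and (A2) $|\!|\!|(0_X,\ldots,0_X,v,0_X,\ldots,0_X)|\!|\!|=\|v\|$ for all $v\in X$ in any $i$th position. $\mathbf{N}^{\rm sc}_{X^n}$ is its subclass of strictly convex norms. $\Omega_n:=\{t\in\mathbb{R}^n\mid t_i\ge0,\ \sum_i t_i=1\}$, $\Omega_n^\circ:=\{t\in\Omega_n\mid t_i<1\ \forall i\}$. $\mathbf{\Psi}_n$ is the class of convex continuous $\psi:\Omega_n\to\mathbb{R}$ with (B1) $\psi(\mathbf{e}_i)=1$ for all standard unit vectors $\mathbf{e}_i$ and (B2) $\psi(t)\ge(1-t_i)\psi\big(\frac{t_1}{1-t_i},\ldots,\frac{t_{i-1}}{1-t_i},0,\frac{t_{i+1}}{1-t_i},\ldots,\frac{t_n}{1-t_i}\big)$ for all $t\in\Omega_n^\circ$, $i=1,\ldots,n$; $\mathbf{\Psi}^{\rm sc}_n$ is its subclass of strictly convex functions. *)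

theory Defs
  imports "HOL-Analysis.Analysis"
begin

text \<open>X is a real normed vector space ('a :: real_normed_vector); X^n is modelled as
  'a ^ 'n with a finite index type 'n, n = CARD('n).\<close>

definition is_norm :: "('v::real_vector \<Rightarrow> real) \<Rightarrow> bool" where
  "is_norm N \<longleftrightarrow>
     (\<forall>x. 0 \<le> N x) \<and> (\<forall>x. N x = 0 \<longleftrightarrow> x = 0) \<and>
     (\<forall>c x. N (c *\<^sub>R x) = \<bar>c\<bar> * N x) \<and>
     (\<forall>x y. N (x + y) \<le> N x + N y)"

definition strictly_convex_norm :: "('v::real_vector \<Rightarrow> real) \<Rightarrow> bool" where
  "strictly_convex_norm N \<longleftrightarrow>
     (\<forall>x y. N x = 1 \<and> N y = 1 \<and> x \<noteq> y \<longrightarrow> N ((1/2) *\<^sub>R (x + y)) < 1)"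

definition N_class :: "(('a::real_normed_vector ^ 'n::finite) \<Rightarrow> real) \<Rightarrow> bool" where
  "N_class N \<longleftrightarrow> is_norm N \<and>
     (\<forall>x (\<epsilon>::'n \<Rightarrow> real). (\<forall>i. \<epsilon> i = 1 \<or> \<epsilon> i = -1) \<longrightarrow>
        N (\<chi> i. \<epsilon> i *\<^sub>R (x $ i)) = N x) \<and>
     (\<forall>i v. N (\<chi> j. if j = i then v else 0) = norm v)"

definition N_sc_class :: "(('a::real_normed_vector ^ 'n::finite) \<Rightarrow> real) \<Rightarrow> bool" where
  "N_sc_class N \<longleftrightarrow> N_class N \<and> strictly_convex_norm N"

definition Omega :: "(real ^ 'n::finite) set" where
  "Omega = {t. (\<forall>i. 0 \<le> t $ i) \<and> (\<Sum>i\<in>UNIV. t $ i) = 1}"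

definition Omega_int :: "(real ^ 'n::finite) set" where
  "Omega_int = {t \<in> Omega. \<forall>i. t $ i < 1}"

definition Psi_class :: "(real ^ 'n::finite \<Rightarrow> real) \<Rightarrow> bool" where
  "Psi_class \<psi> \<longleftrightarrow> convex_on Omega \<psi> \<and> continuous_on Omega \<psi> \<and>
     (\<forall>i. \<psi> (axis i 1) = 1) \<and>
     (\<forall>t\<in>Omega_int. \<forall>i.
        \<psi> t \<ge> (1 - t $ i) * \<psi> (\<chi> j. if j = i then 0 else t $ j / (1 - t $ i)))"

definition strictly_convex_on :: "'v::real_vector set \<Rightarrow> ('v \<Rightarrow> real) \<Rightarrow> bool" where
  "strictly_convex_on S f \<longleftrightarrow>
     (\<forall>x\<in>S. \<forall>y\<in>S. \<forall>u::real. x \<noteq> y \<and> 0 < u \<and> u < 1 \<longrightarrow>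
        f (u *\<^sub>R x + (1 - u) *\<^sub>R y) < u * f x + (1 - u) * f y)"

definition Psi_sc_class :: "(real ^ 'n::finite \<Rightarrow> real) \<Rightarrow> bool" where
  "Psi_sc_class \<psi> \<longleftrightarrow> Psi_class \<psi> \<and> strictly_convex_on Omega \<psi>"

definition psi_norm :: "(real ^ 'n::finite \<Rightarrow> real) \<Rightarrow> ('a::real_normed_vector ^ 'n) \<Rightarrow> real" where
  "psi_norm \<psi> x =
     (if x = 0 then 0
      else (\<Sum>i\<in>UNIV. norm (x $ i)) *
           \<psi> (\<chi> i. norm (x $ i) / (\<Sum>j\<in>UNIV. norm (x $ j))))"

end

theory Submission
  imports Defs
begin

(* Let F t = (sum of the t_i) * psi (t / sum of the t_i) be the positively homogeneous
   extension of psi from Omega to the nonnegative orthant; the psi-norm of x is F applied to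
   the vector |x| = (norm x_1, ..., norm x_n). Convexity of psi makes F subadditive, hence
   convex. Condition (B2) says that F does not increase when one coordinate is set to 0, and
   convexity along the segment then makes F monotone in each coordinate. So
   F |x + y| <= F (|x| + |y|) <= F |x| + F |y|.
   For strict convexity take distinct x, y of psi-norm 1. If the simplex points of |x| and |y|
   differ, strict convexity of psi makes the second inequality strict. Otherwise |x| = |y|,
   and strict convexity of the norm of X makes some coordinate of |x + y| strictly smaller
   than that of |x| + |y|; strict convexity of psi makes F strictly monotone, so the first
   inequality is strict. *)

definition simplex_point :: "real ^ 'n::finite \<Rightarrow> real ^ 'n" where
  "simplex_point t = (\<chi> i. t $ i / (\<Sum>j\<in>UNIV. t $ j))"

definition hom_ext :: "(real ^ 'n::finite \<Rightarrow> real) \<Rightarrow> real ^ 'n \<Rightarrow> real" where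
  "hom_ext \<psi> t = (if t = 0 then 0 else (\<Sum>i\<in>UNIV. t $ i) * \<psi> (simplex_point t))"

definition vec_upd :: "'a ^ 'n::finite \<Rightarrow> 'n \<Rightarrow> 'a \<Rightarrow> 'a ^ 'n" where
  "vec_upd t i s = (\<chi> j. if j = i then s else t $ j)"

lemma vec_upd_nth [simp]: "vec_upd t i s $ j = (if j = i then s else t $ j)"
  by (simp add: vec_upd_def)

lemma vec_upd_same [simp]: "vec_upd t i (t $ i) = t"
  by (simp add: vec_eq_iff)

lemma vec_upd_upd [simp]: "vec_upd (vec_upd t i p) i q = vec_upd t i q"
  by (simp add: vec_eq_iff)

lemma nonneg_vec_upd: "0 \<le> t \<Longrightarrow> 0 \<le> s \<Longrightarrow> 0 \<le> vec_upd (t :: real ^ 'n::finite) i s"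
  by (simp add: less_eq_vec_def)

lemma sum_vec_upd:
  fixes t :: "'a::ab_group_add ^ 'n::finite"
  shows "(\<Sum>j\<in>UNIV. vec_upd t i s $ j) = (\<Sum>j\<in>UNIV. t $ j) - t $ i + s"
proof -
  have "(\<Sum>j\<in>UNIV. vec_upd t i s $ j) = s + (\<Sum>j\<in>UNIV - {i}. vec_upd t i s $ j)"
    by (subst sum.remove[of UNIV i]) auto
  also have "(\<Sum>j\<in>UNIV - {i}. vec_upd t i s $ j) = (\<Sum>j\<in>UNIV - {i}. t $ j)"
    by (rule sum.cong) auto
  also have "\<dots> = (\<Sum>j\<in>UNIV. t $ j) - t $ i"
    by (simp add: sum.remove[of UNIV i])
  finally show ?thesis by simp
qed

lemma sum_pos_if_nonneg_nonzero:
  fixes t :: "real ^ 'n::finite"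
  assumes "0 \<le> t" "t \<noteq> 0"
  shows "0 < (\<Sum>i\<in>UNIV. t $ i)"
proof -
  obtain k where "t $ k \<noteq> 0" using assms(2) by (auto simp: vec_eq_iff)
  with assms(1) have "0 < t $ k" by (simp add: less_eq_vec_def order_less_le)
  also have "t $ k \<le> (\<Sum>i\<in>UNIV. t $ i)"
    using assms(1) by (intro member_le_sum) (auto simp: less_eq_vec_def)
  finally show ?thesis .
qed

lemma others_zero_if_coord_eq_sum:
  fixes t :: "real ^ 'n::finite"
  assumes "0 \<le> t" "t $ k = (\<Sum>i\<in>UNIV. t $ i)" "j \<noteq> k"
  shows "t $ j = 0"
proof -
  have "(\<Sum>i\<in>UNIV - {k}. t $ i) = 0"
    using assms(2) by (simp add: sum.remove[of UNIV k])
  with assms(1) have "\<forall>i\<in>UNIV - {k}. t $ i = 0"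
    by (subst (asm) sum_nonneg_eq_0_iff) (auto simp: less_eq_vec_def)
  with assms(3) show ?thesis by blast
qed

lemma simplex_point_in_Omega:
  assumes "0 \<le> t" "t \<noteq> 0"
  shows "simplex_point t \<in> Omega"
  using sum_pos_if_nonneg_nonzero[OF assms] assms(1)
  by (auto simp: Omega_def simplex_point_def less_eq_vec_def sum_divide_distrib[symmetric])

lemma simplex_point_Omega: "s \<in> Omega \<Longrightarrow> simplex_point s = s"
  by (simp add: Omega_def simplex_point_def)

lemma scaleR_sum_simplex_point:
  "(\<Sum>j\<in>UNIV. t $ j) \<noteq> 0 \<Longrightarrow> (\<Sum>j\<in>UNIV. t $ j) *\<^sub>R simplex_point t = t"
  by (simp add: simplex_point_def vec_eq_iff)

lemma simplex_point_scaleR: "0 < c \<Longrightarrow> simplex_point (c *\<^sub>R t) = simplex_point t"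
  by (simp add: simplex_point_def vec_eq_iff sum_distrib_left[symmetric])

lemma simplex_point_add:
  fixes a b :: "real ^ 'n::finite"
  defines "u \<equiv> (\<Sum>j\<in>UNIV. a $ j) / ((\<Sum>j\<in>UNIV. a $ j) + (\<Sum>j\<in>UNIV. b $ j))"
  assumes "0 < (\<Sum>j\<in>UNIV. a $ j)" "0 < (\<Sum>j\<in>UNIV. b $ j)"
  shows "simplex_point (a + b) = u *\<^sub>R simplex_point a + (1 - u) *\<^sub>R simplex_point b"
proof -
  have "1 - u = (\<Sum>j\<in>UNIV. b $ j) / ((\<Sum>j\<in>UNIV. a $ j) + (\<Sum>j\<in>UNIV. b $ j))"
    using assms(2,3) by (simp add: u_def field_simps)
  then show ?thesis
    using assms(2,3) by (simp add: u_def simplex_point_def vec_eq_iff sum.distrib add_divide_distrib)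
qed

lemma Omega_nonzero: "s \<in> Omega \<Longrightarrow> s \<noteq> 0"
  by (auto simp: Omega_def)

lemma axis_in_Omega: "axis i 1 \<in> Omega"
  by (simp add: Omega_def axis_def)

lemma hom_ext_Omega: "s \<in> Omega \<Longrightarrow> hom_ext \<psi> s = \<psi> s"
  by (simp add: hom_ext_def Omega_nonzero simplex_point_Omega) (simp add: Omega_def)

lemma hom_ext_scaleR:
  assumes "0 \<le> c"
  shows "hom_ext \<psi> (c *\<^sub>R t) = c * hom_ext \<psi> t"
proof (cases "c = 0 \<or> t = 0")
  case False
  with assms have "0 < c" by simp
  with False show ?thesis
    by (simp add: hom_ext_def simplex_point_scaleR sum_distrib_left[symmetric])
qed (auto simp: hom_ext_def)

lemma hom_ext_axis:
  assumes "\<psi> (axis i 1) = 1" "0 \<le> c"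
  shows "hom_ext \<psi> (c *\<^sub>R axis i 1) = c"
  using assms by (simp add: hom_ext_scaleR hom_ext_Omega axis_in_Omega)

lemma hom_ext_add_as_convex_combination:
  fixes a b :: "real ^ 'n::finite"
  assumes a: "0 \<le> a" "a \<noteq> 0" and b: "0 \<le> b" "b \<noteq> 0"
  obtains u where "0 < u" "u < 1"
    and "hom_ext \<psi> (a + b) =
      (\<Sum>j\<in>UNIV. (a + b) $ j) * \<psi> (u *\<^sub>R simplex_point a + (1 - u) *\<^sub>R simplex_point b)"
    and "hom_ext \<psi> a + hom_ext \<psi> b =
      (\<Sum>j\<in>UNIV. (a + b) $ j) * (u * \<psi> (simplex_point a) + (1 - u) * \<psi> (simplex_point b))"
proof -
  define S where "S = (\<Sum>j\<in>UNIV. a $ j)"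
  define T where "T = (\<Sum>j\<in>UNIV. b $ j)"
  define u where "u = S / (S + T)"
  have S: "0 < S" and T: "0 < T"
    using sum_pos_if_nonneg_nonzero a b by (auto simp: S_def T_def)
  have sum_ab: "(\<Sum>j\<in>UNIV. (a + b) $ j) = S + T"
    by (simp add: S_def T_def sum.distrib)
  have "a + b \<noteq> 0"
  proof
    assume "a + b = 0"
    then show False using S T sum_ab by simp
  qed
  moreover have "simplex_point (a + b) = u *\<^sub>R simplex_point a + (1 - u) *\<^sub>R simplex_point b"
    using simplex_point_add[OF S[unfolded S_def] T[unfolded T_def]] by (simp add: u_def S_def T_def)
  ultimately have "hom_ext \<psi> (a + b) =
      (\<Sum>j\<in>UNIV. (a + b) $ j) * \<psi> (u *\<^sub>R simplex_point a + (1 - u) *\<^sub>R simplex_point b)"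
    by (simp add: hom_ext_def)
  moreover have "hom_ext \<psi> a + hom_ext \<psi> b =
      (\<Sum>j\<in>UNIV. (a + b) $ j) * (u * \<psi> (simplex_point a) + (1 - u) * \<psi> (simplex_point b))"
  proof -
    have "(S + T) * u = S" "(S + T) * (1 - u) = T"
      using S T by (simp_all add: u_def field_simps)
    then show ?thesis
      using a b by (simp add: hom_ext_def sum.distrib S_def T_def distrib_left mult.assoc[symmetric])
  qed
  moreover have "0 < u" "u < 1"
    using S T by (auto simp: u_def)
  ultimately show thesis using that by blast
qed

lemma hom_ext_subadditive:
  fixes a b :: "real ^ 'n::finite"
  assumes \<psi>: "convex_on Omega \<psi>" and "0 \<le> a" "0 \<le> b"
  shows "hom_ext \<psi> (a + b) \<le> hom_ext \<psi> a + hom_ext \<psi> b"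
proof (cases "a = 0 \<or> b = 0")
  case False
  then obtain u where u: "0 < u" "u < 1"
    and split: "hom_ext \<psi> (a + b) =
      (\<Sum>j\<in>UNIV. (a + b) $ j) * \<psi> (u *\<^sub>R simplex_point a + (1 - u) *\<^sub>R simplex_point b)"
      "hom_ext \<psi> a + hom_ext \<psi> b =
      (\<Sum>j\<in>UNIV. (a + b) $ j) * (u * \<psi> (simplex_point a) + (1 - u) * \<psi> (simplex_point b))"
    using hom_ext_add_as_convex_combination assms(2,3) by metis
  have "\<psi> (u *\<^sub>R simplex_point a + (1 - u) *\<^sub>R simplex_point b)
      \<le> u * \<psi> (simplex_point a) + (1 - u) * \<psi> (simplex_point b)"
    using \<psi> u False assms(2,3) by (simp add: convex_on_def simplex_point_in_Omega)
  moreover have "0 \<le> (\<Sum>j\<in>UNIV. (a + b) $ j)"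
    using assms(2,3) by (intro sum_nonneg) (auto simp: less_eq_vec_def)
  ultimately show ?thesis
    unfolding split by (rule mult_left_mono)
qed (auto simp: hom_ext_def)

lemma hom_ext_strictly_subadditive:
  fixes a b :: "real ^ 'n::finite"
  assumes \<psi>: "strictly_convex_on Omega \<psi>"
    and a: "0 \<le> a" "a \<noteq> 0" and b: "0 \<le> b" "b \<noteq> 0"
    and "simplex_point a \<noteq> simplex_point b"
  shows "hom_ext \<psi> (a + b) < hom_ext \<psi> a + hom_ext \<psi> b"
proof -
  obtain u where u: "0 < u" "u < 1"
    and split: "hom_ext \<psi> (a + b) =
      (\<Sum>j\<in>UNIV. (a + b) $ j) * \<psi> (u *\<^sub>R simplex_point a + (1 - u) *\<^sub>R simplex_point b)"
      "hom_ext \<psi> a + hom_ext \<psi> b =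
      (\<Sum>j\<in>UNIV. (a + b) $ j) * (u * \<psi> (simplex_point a) + (1 - u) * \<psi> (simplex_point b))"
    using hom_ext_add_as_convex_combination a b by metis
  have "\<psi> (u *\<^sub>R simplex_point a + (1 - u) *\<^sub>R simplex_point b)
      < u * \<psi> (simplex_point a) + (1 - u) * \<psi> (simplex_point b)"
    using \<psi> u assms(6) a b by (simp add: strictly_convex_on_def simplex_point_in_Omega)
  moreover have "0 < (\<Sum>j\<in>UNIV. (a + b) $ j)"
    using sum_pos_if_nonneg_nonzero[OF a] sum_pos_if_nonneg_nonzero[OF b]
    by (simp add: sum.distrib)
  ultimately show ?thesis
    unfolding split by (rule mult_strict_left_mono)
qed

lemma convex_nonneg_orthant: "convex {t :: real ^ 'n::finite. 0 \<le> t}"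
  by (auto simp: convex_def less_eq_vec_def)

lemma convex_on_hom_ext:
  fixes \<psi> :: "real ^ 'n::finite \<Rightarrow> real"
  assumes "convex_on Omega \<psi>"
  shows "convex_on {t. 0 \<le> t} (hom_ext \<psi>)"
proof (rule convex_onI[OF _ convex_nonneg_orthant])
  fix l :: real and a b :: "real ^ 'n"
  assume "0 < l" "l < 1" "a \<in> {t. 0 \<le> t}" "b \<in> {t. 0 \<le> t}"
  then show "hom_ext \<psi> ((1 - l) *\<^sub>R a + l *\<^sub>R b) \<le> (1 - l) * hom_ext \<psi> a + l * hom_ext \<psi> b"
    using hom_ext_subadditive[OF assms, of "(1 - l) *\<^sub>R a" "l *\<^sub>R b"]
    by (simp add: hom_ext_scaleR less_eq_vec_def)
qed

lemma coord_le_sum: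
  fixes t :: "real ^ 'n::finite"
  shows "0 \<le> t \<Longrightarrow> t $ k \<le> (\<Sum>j\<in>UNIV. t $ j)"
  by (rule member_le_sum) (auto simp: less_eq_vec_def)

lemma hom_ext_vec_upd_zero:
  fixes t :: "real ^ 'n::finite"
  defines "w \<equiv> simplex_point t"
  assumes S: "0 < (\<Sum>j\<in>UNIV. t $ j)" and less_S: "t $ i < (\<Sum>j\<in>UNIV. t $ j)"
  shows "hom_ext \<psi> (vec_upd t i 0) =
    (\<Sum>j\<in>UNIV. t $ j) * ((1 - w $ i) * \<psi> (\<chi> j. if j = i then 0 else w $ j / (1 - w $ i)))"
proof -
  define S where "S = (\<Sum>j\<in>UNIV. t $ j)"
  have pos: "0 < S - t $ i"
    using less_S by (simp add: S_def)
  have w_i: "1 - w $ i = (S - t $ i) / S"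
    using S by (simp add: w_def simplex_point_def S_def field_simps)
  have sum_upd: "(\<Sum>j\<in>UNIV. vec_upd t i 0 $ j) = S - t $ i"
    by (simp add: sum_vec_upd S_def del: vec_upd_nth)
  then have "vec_upd t i 0 \<noteq> 0"
    using pos by (auto simp del: vec_upd_nth)
  moreover have "simplex_point (vec_upd t i 0) = (\<chi> j. if j = i then 0 else w $ j / (1 - w $ i))"
    using S pos unfolding simplex_point_def sum_upd w_i
    by (simp add: vec_eq_iff w_def simplex_point_def S_def)
  ultimately show ?thesis
    using S unfolding hom_ext_def sum_upd S_def[symmetric] by (simp add: w_i)
qed

(* (B2) in homogeneous form. (B2) only speaks about points of Omega_int, so vectors
   supported on a single coordinate are treated separately. *)
lemma hom_ext_vec_upd_zero_le:
  fixes \<psi> :: "real ^ 'n::finite \<Rightarrow> real"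
  assumes \<psi>: "Psi_class \<psi>" and t: "0 \<le> t"
  shows "hom_ext \<psi> (vec_upd t i 0) \<le> hom_ext \<psi> t"
proof (cases "\<exists>k. t $ k = (\<Sum>j\<in>UNIV. t $ j)")
  case True
  then obtain k where k: "t $ k = (\<Sum>j\<in>UNIV. t $ j)" by blast
  have others: "t $ j = 0" if "j \<noteq> k" for j
    using others_zero_if_coord_eq_sum[OF t k that] .
  show ?thesis
  proof (cases "k = i")
    case True
    with others have "t = t $ i *\<^sub>R axis i 1" "vec_upd t i 0 = 0"
      by (auto simp: vec_eq_iff axis_def)
    moreover have "\<psi> (axis i 1) = 1" "0 \<le> t $ i"
      using \<psi> t by (auto simp: Psi_class_def less_eq_vec_def)
    ultimately show ?thesis
      by (metis hom_ext_axis hom_ext_def)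
  next
    case False
    with others have "vec_upd t i 0 = t"
      by (auto simp: vec_eq_iff)
    then show ?thesis by simp
  qed
next
  case False
  define S where "S = (\<Sum>j\<in>UNIV. t $ j)"
  define w where "w = simplex_point t"
  have "t \<noteq> 0"
    using False by auto
  then have S: "0 < S"
    using sum_pos_if_nonneg_nonzero t S_def by blast
  have less_S: "t $ k < S" for k
    using False coord_le_sum[OF t, of k] by (auto simp: S_def order_less_le)
  then have "w \<in> Omega_int"
    using simplex_point_in_Omega[OF t \<open>t \<noteq> 0\<close>] S
    by (simp add: Omega_int_def w_def simplex_point_def S_def)
  then have B2: "(1 - w $ i) * \<psi> (\<chi> j. if j = i then 0 else w $ j / (1 - w $ i)) \<le> \<psi> w"
    using \<psi> by (simp add: Psi_class_def)
  have "hom_ext \<psi> (vec_upd t i 0) = S * ((1 - w $ i) * \<psi> (\<chi> j. if j = i then 0 else w $ j / (1 - w $ i)))"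
    using hom_ext_vec_upd_zero[of t i \<psi>, folded S_def w_def] S less_S[of i] by blast
  also have "\<dots> \<le> S * \<psi> w"
    using B2 S by simp
  also have "\<dots> = hom_ext \<psi> t"
    using \<open>t \<noteq> 0\<close> by (simp add: hom_ext_def S_def w_def)
  finally show ?thesis .
qed

lemma vec_upd_convex_combination:
  fixes t :: "real ^ 'n::finite"
  assumes "0 < q"
  shows "vec_upd t i p = (1 - p / q) *\<^sub>R vec_upd t i 0 + (p / q) *\<^sub>R vec_upd t i q"
  using assms by (simp add: vec_eq_iff field_simps)

lemma hom_ext_vec_upd_le_interpolation:
  fixes \<psi> :: "real ^ 'n::finite \<Rightarrow> real"
  assumes "convex_on Omega \<psi>" "0 \<le> t" "0 \<le> p" "p \<le> q" "0 < q"
  shows "hom_ext \<psi> (vec_upd t i p)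
    \<le> (1 - p / q) * hom_ext \<psi> (vec_upd t i 0) + (p / q) * hom_ext \<psi> (vec_upd t i q)"
  unfolding vec_upd_convex_combination[OF \<open>0 < q\<close>, of t i p]
  using convex_on_hom_ext[OF assms(1)] assms(2-5)
  by (intro convex_onD) (auto simp: nonneg_vec_upd)

lemma hom_ext_mono_coord:
  fixes \<psi> :: "real ^ 'n::finite \<Rightarrow> real"
  assumes \<psi>: "Psi_class \<psi>" and t: "0 \<le> t" and pq: "0 \<le> p" "p \<le> q"
  shows "hom_ext \<psi> (vec_upd t i p) \<le> hom_ext \<psi> (vec_upd t i q)"
proof (cases "q = 0")
  case False
  with pq have q: "0 < q" by simp
  have l: "0 \<le> p / q" "p / q \<le> 1"
    using pq q by auto
  have tq: "0 \<le> vec_upd t i q"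
    using t q by (simp add: nonneg_vec_upd)
  have "hom_ext \<psi> (vec_upd t i p)
      \<le> (1 - p / q) * hom_ext \<psi> (vec_upd t i 0) + (p / q) * hom_ext \<psi> (vec_upd t i q)"
    using \<psi> t pq q by (intro hom_ext_vec_upd_le_interpolation) (auto simp: Psi_class_def)
  also have "\<dots> \<le> (1 - p / q) * hom_ext \<psi> (vec_upd t i q) + (p / q) * hom_ext \<psi> (vec_upd t i q)"
    using hom_ext_vec_upd_zero_le[OF \<psi> tq, of i] l
    by (simp add: mult_left_mono)
  finally show ?thesis
    by (simp add: algebra_simps)
qed (use pq in simp)

lemma hom_ext_mono:
  fixes \<psi> :: "real ^ 'n::finite \<Rightarrow> real"
  assumes \<psi>: "Psi_class \<psi>" and "0 \<le> a" "a \<le> b"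
  shows "hom_ext \<psi> a \<le> hom_ext \<psi> b"
proof -
  have b: "0 \<le> b"
    using assms(2,3) by (rule order_trans)
  have agree_outside: "\<forall>a. 0 \<le> a \<longrightarrow> a \<le> b \<longrightarrow> {i. a $ i \<noteq> b $ i} \<subseteq> D \<longrightarrow>
      hom_ext \<psi> a \<le> hom_ext \<psi> b"
    if "finite D" for D
    using that
  proof (induction D rule: finite_induct)
    case empty
    then show ?case by (auto simp flip: vec_eq_iff)
  next
    case (insert i D)
    show ?case
    proof (intro allI impI)
      fix a
      assume a: "0 \<le> a" "a \<le> b" and diff: "{i. a $ i \<noteq> b $ i} \<subseteq> insert i D"
      have "hom_ext \<psi> (vec_upd a i (a $ i)) \<le> hom_ext \<psi> (vec_upd a i (b $ i))"
      proof (rule hom_ext_mono_coord[OF \<psi> a(1)])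
        show "0 \<le> a $ i" "a $ i \<le> b $ i"
          using a by (simp_all add: less_eq_vec_def)
      qed
      also have "\<dots> \<le> hom_ext \<psi> b"
      proof (rule insert.IH[rule_format])
        show "0 \<le> vec_upd a i (b $ i)" "vec_upd a i (b $ i) \<le> b"
          using a b by (simp_all add: less_eq_vec_def)
        show "{j. vec_upd a i (b $ i) $ j \<noteq> b $ j} \<subseteq> D"
          using diff by (auto split: if_split_asm)
      qed
      finally show "hom_ext \<psi> a \<le> hom_ext \<psi> b" by simp
    qed
  qed
  show ?thesis
    using agree_outside[of UNIV] assms(2,3) by simp
qed

lemma coord_le_hom_ext:
  fixes \<psi> :: "real ^ 'n::finite \<Rightarrow> real"
  assumes \<psi>: "Psi_class \<psi>" and t: "0 \<le> t"
  shows "t $ k \<le> hom_ext \<psi> t"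
proof -
  have "0 \<le> t $ k"
    using t by (simp add: less_eq_vec_def)
  then have "t $ k = hom_ext \<psi> (t $ k *\<^sub>R axis k 1)"
    using \<psi> by (simp add: hom_ext_axis Psi_class_def)
  also have "\<dots> \<le> hom_ext \<psi> t"
    using t by (intro hom_ext_mono[OF \<psi>]) (auto simp: less_eq_vec_def axis_def)
  finally show ?thesis .
qed

(* a and b below have different simplex points, so strict subadditivity at their midpoint,
   combined with monotonicity between a and the midpoint, forces F a < F b. *)
lemma hom_ext_vec_upd_zero_less:
  fixes \<psi> :: "real ^ 'n::finite \<Rightarrow> real"
  assumes \<psi>: "Psi_sc_class \<psi>" and t: "0 \<le> t" and k: "k \<noteq> i" "t $ k \<noteq> 0" and q: "0 < q"
  shows "hom_ext \<psi> (vec_upd t i 0) < hom_ext \<psi> (vec_upd t i q)"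
proof -
  define a where "a = vec_upd t i 0"
  define b where "b = vec_upd t i q"
  have a: "0 \<le> a" "a \<noteq> 0"
    using t k by (auto simp: a_def nonneg_vec_upd vec_eq_iff)
  have b: "0 \<le> b" "b \<noteq> 0"
    using t q by (auto simp: b_def nonneg_vec_upd vec_eq_iff)
  have "simplex_point a $ i \<noteq> simplex_point b $ i"
    using q sum_pos_if_nonneg_nonzero[OF b] by (simp add: simplex_point_def a_def b_def)
  then have "hom_ext \<psi> (a + b) < hom_ext \<psi> a + hom_ext \<psi> b"
    using \<psi> a b by (intro hom_ext_strictly_subadditive) (auto simp: Psi_sc_class_def)
  moreover have "a + b = 2 *\<^sub>R vec_upd t i (q / 2)"
    by (simp add: a_def b_def vec_eq_iff)
  moreover have "hom_ext \<psi> a \<le> hom_ext \<psi> (vec_upd t i (q / 2))"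
    unfolding a_def using \<psi> t q by (intro hom_ext_mono_coord) (auto simp: Psi_sc_class_def)
  ultimately show ?thesis
    by (simp add: hom_ext_scaleR a_def b_def)
qed

lemma hom_ext_strict_mono_coord:
  fixes \<psi> :: "real ^ 'n::finite \<Rightarrow> real"
  assumes \<psi>: "Psi_sc_class \<psi>" and t: "0 \<le> t" and pq: "0 \<le> p" "p < q"
  shows "hom_ext \<psi> (vec_upd t i p) < hom_ext \<psi> (vec_upd t i q)"
proof (cases "\<forall>j. j \<noteq> i \<longrightarrow> t $ j = 0")
  case True
  then have "vec_upd t i s = s *\<^sub>R axis i 1" for s
    by (auto simp: vec_eq_iff axis_def)
  moreover have "\<psi> (axis i 1) = 1"
    using \<psi> by (simp add: Psi_sc_class_def Psi_class_def)
  ultimately show ?thesis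
    using pq by (simp add: hom_ext_axis)
next
  case False
  then obtain k where k: "k \<noteq> i" "t $ k \<noteq> 0" by blast
  have q: "0 < q"
    using pq by simp
  have less: "hom_ext \<psi> (vec_upd t i 0) < hom_ext \<psi> (vec_upd t i q)"
    using hom_ext_vec_upd_zero_less[OF \<psi> t k q] .
  have "hom_ext \<psi> (vec_upd t i p)
      \<le> (1 - p / q) * hom_ext \<psi> (vec_upd t i 0) + (p / q) * hom_ext \<psi> (vec_upd t i q)"
    using \<psi> t pq q
    by (intro hom_ext_vec_upd_le_interpolation) (auto simp: Psi_sc_class_def Psi_class_def)
  also have "\<dots> < hom_ext \<psi> (vec_upd t i q)"
    using mult_pos_pos[of "1 - p / q" "hom_ext \<psi> (vec_upd t i q) - hom_ext \<psi> (vec_upd t i 0)"]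
      less pq q
    by (simp add: algebra_simps)
  finally show ?thesis .
qed

lemma hom_ext_strict_mono:
  fixes \<psi> :: "real ^ 'n::finite \<Rightarrow> real"
  assumes \<psi>: "Psi_sc_class \<psi>" and a: "0 \<le> a" and "a \<le> b" "a $ i < b $ i"
  shows "hom_ext \<psi> a < hom_ext \<psi> b"
proof -
  have "hom_ext \<psi> (vec_upd a i (a $ i)) < hom_ext \<psi> (vec_upd a i (b $ i))"
    using assms by (intro hom_ext_strict_mono_coord) (auto simp: less_eq_vec_def)
  also have "\<dots> \<le> hom_ext \<psi> b"
    using \<psi> assms order_trans[of 0 "a $ i" "b $ i"]
    by (intro hom_ext_mono) (auto simp: Psi_sc_class_def less_eq_vec_def)
  finally show ?thesis by simp
qed

lemma eq_if_same_simplex_point_and_hom_ext: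
  fixes a b :: "real ^ 'n::finite"
  assumes "simplex_point a = simplex_point b" "hom_ext \<psi> a = hom_ext \<psi> b" "hom_ext \<psi> a \<noteq> 0"
  shows "a = b"
proof -
  have "a \<noteq> 0" "b \<noteq> 0"
    using assms(2,3) by (auto simp: hom_ext_def)
  then have "(\<Sum>j\<in>UNIV. a $ j) * \<psi> (simplex_point a) = (\<Sum>j\<in>UNIV. b $ j) * \<psi> (simplex_point a)"
    using assms(1,2) by (simp add: hom_ext_def)
  moreover have "(\<Sum>j\<in>UNIV. a $ j) \<noteq> 0" "\<psi> (simplex_point a) \<noteq> 0"
    using \<open>a \<noteq> 0\<close> assms(3) by (auto simp: hom_ext_def)
  ultimately have "(\<Sum>j\<in>UNIV. a $ j) = (\<Sum>j\<in>UNIV. b $ j)"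
    by simp
  then show ?thesis
    using scaleR_sum_simplex_point[of a] scaleR_sum_simplex_point[of b] assms(1)
      \<open>(\<Sum>j\<in>UNIV. a $ j) \<noteq> 0\<close> by metis
qed

definition coord_norms :: "'a::real_normed_vector ^ 'n::finite \<Rightarrow> real ^ 'n" where
  "coord_norms x = (\<chi> i. norm (x $ i))"

lemma coord_norms_nonneg: "0 \<le> coord_norms x"
  by (simp add: coord_norms_def less_eq_vec_def)

lemma coord_norms_scaleR: "coord_norms (c *\<^sub>R x) = \<bar>c\<bar> *\<^sub>R coord_norms x"
  by (simp add: coord_norms_def vec_eq_iff)

lemma coord_norms_add_le: "coord_norms (x + y) \<le> coord_norms x + coord_norms y"
  by (simp add: coord_norms_def less_eq_vec_def norm_triangle_ineq)

lemma psi_norm_eq_hom_ext: "psi_norm \<psi> x = hom_ext \<psi> (coord_norms x)"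
proof -
  have "coord_norms x = 0 \<longleftrightarrow> x = 0"
    by (simp add: coord_norms_def vec_eq_iff)
  then show ?thesis
    by (simp add: psi_norm_def hom_ext_def simplex_point_def coord_norms_def)
qed

lemma N_class_psi_norm:
  fixes \<psi> :: "real ^ 'n::finite \<Rightarrow> real"
  assumes \<psi>: "Psi_class \<psi>"
  shows "N_class (psi_norm \<psi> :: 'a::real_normed_vector ^ 'n \<Rightarrow> real)"
proof -
  have coord_le: "norm (x $ k) \<le> psi_norm \<psi> x" for x :: "'a ^ 'n" and k
    using coord_le_hom_ext[OF \<psi> coord_norms_nonneg[of x], of k]
    by (simp add: psi_norm_eq_hom_ext coord_norms_def)
  have nonneg: "0 \<le> psi_norm \<psi> x" for x :: "'a ^ 'n"
    using coord_le norm_ge_zero order_trans by blast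
  have definite: "psi_norm \<psi> x = 0 \<longleftrightarrow> x = 0" for x :: "'a ^ 'n"
  proof
    assume "psi_norm \<psi> x = 0"
    then have "norm (x $ k) = 0" for k
      using coord_le[of x k] norm_ge_zero[of "x $ k"] by linarith
    then show "x = 0"
      by (simp add: vec_eq_iff)
  qed (simp add: psi_norm_def)
  have homogeneous: "psi_norm \<psi> (c *\<^sub>R x) = \<bar>c\<bar> * psi_norm \<psi> x" for c and x :: "'a ^ 'n"
    by (simp add: psi_norm_eq_hom_ext coord_norms_scaleR hom_ext_scaleR)
  have triangle: "psi_norm \<psi> (x + y) \<le> psi_norm \<psi> x + psi_norm \<psi> y" for x y :: "'a ^ 'n"
  proof -
    have "hom_ext \<psi> (coord_norms (x + y)) \<le> hom_ext \<psi> (coord_norms x + coord_norms y)"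
      by (rule hom_ext_mono[OF \<psi> coord_norms_nonneg coord_norms_add_le])
    also have "\<dots> \<le> hom_ext \<psi> (coord_norms x) + hom_ext \<psi> (coord_norms y)"
      using \<psi> by (intro hom_ext_subadditive coord_norms_nonneg) (simp add: Psi_class_def)
    finally show ?thesis
      by (simp add: psi_norm_eq_hom_ext)
  qed
  have sign_invariant: "psi_norm \<psi> (\<chi> i. \<epsilon> i *\<^sub>R (x $ i)) = psi_norm \<psi> x"
    if "\<forall>i. \<epsilon> i = 1 \<or> \<epsilon> i = -1" for x :: "'a ^ 'n" and \<epsilon> :: "'n \<Rightarrow> real"
  proof -
    have "\<bar>\<epsilon> i\<bar> = 1" for i
      using that by (metis abs_1 abs_minus)
    then have "coord_norms (\<chi> i. \<epsilon> i *\<^sub>R (x $ i)) = coord_norms x"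
      by (simp add: coord_norms_def vec_eq_iff)
    then show ?thesis
      by (simp add: psi_norm_eq_hom_ext)
  qed
  have single_coord: "psi_norm \<psi> ((\<chi> j. if j = i then v else 0) :: 'a ^ 'n) = norm v" for i v
  proof -
    have "coord_norms ((\<chi> j. if j = i then v else 0) :: 'a ^ 'n) = norm v *\<^sub>R axis i 1"
      by (simp add: coord_norms_def vec_eq_iff axis_def)
    then show ?thesis
      using \<psi> by (simp add: psi_norm_eq_hom_ext hom_ext_axis Psi_class_def)
  qed
  show ?thesis
    unfolding N_class_def is_norm_def
    using nonneg definite homogeneous triangle sign_invariant single_coord by simp
qed

lemma norm_add_less_if_strictly_convex:
  fixes v w :: "'a::real_normed_vector"
  assumes sc: "strictly_convex_norm (norm :: 'a \<Rightarrow> real)" and "norm v = norm w" "v \<noteq> w"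
  shows "norm (v + w) < norm v + norm w"
proof -
  define r where "r = norm v"
  have r: "0 < r"
    using assms(2,3) by (auto simp: r_def)
  have "norm ((1/2) *\<^sub>R ((1/r) *\<^sub>R v + (1/r) *\<^sub>R w)) < 1"
    using sc r assms(2,3) unfolding strictly_convex_norm_def by (simp add: r_def)
  also have "(1/2) *\<^sub>R ((1/r) *\<^sub>R v + (1/r) *\<^sub>R w) = (1 / (2 * r)) *\<^sub>R (v + w)"
    by (simp add: scaleR_add_right)
  finally have "norm (v + w) / (2 * r) < 1"
    using r by simp
  then show ?thesis
    using r assms(2) by (simp add: r_def)
qed

lemma strictly_convex_psi_norm:
  fixes \<psi> :: "real ^ 'n::finite \<Rightarrow> real"
  assumes \<psi>: "Psi_sc_class \<psi>" and sc: "strictly_convex_norm (norm :: 'a::real_normed_vector \<Rightarrow> real)"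
  shows "strictly_convex_norm (psi_norm \<psi> :: 'a ^ 'n \<Rightarrow> real)"
  unfolding strictly_convex_norm_def
proof (intro allI impI, elim conjE)
  fix x y :: "'a ^ 'n"
  assume x: "psi_norm \<psi> x = 1" and y: "psi_norm \<psi> y = 1" and "x \<noteq> y"
  have \<psi>_Psi: "Psi_class \<psi>"
    using \<psi> by (simp add: Psi_sc_class_def)
  define a where "a = coord_norms x"
  define b where "b = coord_norms y"
  have a: "0 \<le> a" "hom_ext \<psi> a = 1" and b: "0 \<le> b" "hom_ext \<psi> b = 1"
    using x y by (simp_all add: a_def b_def coord_norms_nonneg psi_norm_eq_hom_ext)
  have le: "coord_norms (x + y) \<le> a + b"
    by (simp add: a_def b_def coord_norms_add_le)
  have "hom_ext \<psi> (coord_norms (x + y)) < 2"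
  proof (cases "simplex_point a = simplex_point b")
    case False
    have "hom_ext \<psi> (coord_norms (x + y)) \<le> hom_ext \<psi> (a + b)"
      by (rule hom_ext_mono[OF \<psi>_Psi coord_norms_nonneg le])
    also have "\<dots> < hom_ext \<psi> a + hom_ext \<psi> b"
      using \<psi> a b False
      by (intro hom_ext_strictly_subadditive) (auto simp: Psi_sc_class_def hom_ext_def)
    finally show ?thesis
      using a b by simp
  next
    case True
    have "a = b"
      by (rule eq_if_same_simplex_point_and_hom_ext[OF True, of \<psi>]) (simp_all add: a b)
    obtain i where xy_i: "x $ i \<noteq> y $ i"
      using \<open>x \<noteq> y\<close> by (auto simp: vec_eq_iff)
    have "norm (x $ i) = norm (y $ i)"
      using \<open>a = b\<close> by (metis a_def b_def coord_norms_def vec_lambda_beta)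
    then have "norm (x $ i + y $ i) < norm (x $ i) + norm (y $ i)"
      using xy_i by (rule norm_add_less_if_strictly_convex[OF sc])
    then have "coord_norms (x + y) $ i < (a + b) $ i"
      by (simp add: a_def b_def coord_norms_def)
    then have "hom_ext \<psi> (coord_norms (x + y)) < hom_ext \<psi> (a + b)"
      by (rule hom_ext_strict_mono[OF \<psi> coord_norms_nonneg le])
    also have "\<dots> \<le> hom_ext \<psi> a + hom_ext \<psi> b"
      using \<psi>_Psi a b by (intro hom_ext_subadditive) (simp_all add: Psi_class_def)
    finally show ?thesis
      using a b by simp
  qed
  then show "psi_norm \<psi> ((1/2) *\<^sub>R (x + y)) < 1"
    by (simp add: psi_norm_eq_hom_ext coord_norms_scaleR hom_ext_scaleR coord_norms_nonneg)
qed

lemma psi_norm_unit_vectors: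
  assumes "\<forall>i. norm (u $ i) = 1" "s \<in> Omega"
  shows "psi_norm \<psi> (\<chi> i. s $ i *\<^sub>R u $ i) = \<psi> s"
proof -
  have "coord_norms (\<chi> i. s $ i *\<^sub>R u $ i) = s"
    using assms by (auto simp: coord_norms_def vec_eq_iff Omega_def)
  then show ?thesis
    using assms(2) by (simp add: psi_norm_eq_hom_ext hom_ext_Omega)
qed

theorem theorem2p10:
  fixes \<psi> :: "real ^ 'n::finite \<Rightarrow> real"
  assumes n2: "CARD('n) \<ge> 2"
    and psi: "Psi_class \<psi>"
  shows "N_class (psi_norm \<psi> :: 'a::real_normed_vector ^ 'n \<Rightarrow> real)
    \<and> (Psi_sc_class \<psi> \<and> strictly_convex_norm (norm :: 'a \<Rightarrow> real) \<longrightarrow>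
           N_sc_class (psi_norm \<psi> :: 'a ^ 'n \<Rightarrow> real))
    \<and> (\<forall>(u :: 'a ^ 'n) s. (\<forall>i. norm (u $ i) = 1) \<and> s \<in> Omega \<longrightarrow>
           \<psi> s = psi_norm \<psi> (\<chi> i. (s $ i) *\<^sub>R (u $ i)))"
proof (intro conjI impI allI)
  show "N_class (psi_norm \<psi> :: 'a ^ 'n \<Rightarrow> real)"
    using psi by (rule N_class_psi_norm)
  then show "N_sc_class (psi_norm \<psi> :: 'a ^ 'n \<Rightarrow> real)"
    if "Psi_sc_class \<psi> \<and> strictly_convex_norm (norm :: 'a \<Rightarrow> real)"
    using that strictly_convex_psi_norm by (auto simp: N_sc_class_def)
  show "\<psi> s = psi_norm \<psi> (\<chi> i. s $ i *\<^sub>R u $ i)"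
    if "(\<forall>i. norm (u $ i) = 1) \<and> s \<in> Omega" for u :: "'a ^ 'n" and s
    using that psi_norm_unit_vectors[of u s \<psi>] by simp
qed

end
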